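(* For every $\varepsilon\ge\delta>0$ there is a randomized two-party communication protocol which, given a perfect marriage $\mu$ between $W$ and $M$ ($|W|=|M|=n$) known to both parties, with Alice holding the women's full preference profile and Bob holding the men's full preference profile, determines whether $\mu$ induces at least $\varepsilon n^2$ blocking pairs or at most $(\varepsilon-\delta)n^2$ blocking pairs (promised that one of these holds), using $O(\log n)$ bits of communication. In particular, such a protocol determines whether $\mu$ is stable or has at least $\varepsilon n^2$ blocking pairs using $O(\log n)$ communication.
   Context: A full preference profile of the women gives each woman a total order on $M$; that of the men gives each man a total order on $W$. A perfect marriage is a bijection between $W$ and $M$. A pair $(w,m)$ is blocking for $\mu$ if $w$ prefers $m$ to her spouse in $\mu$ and $m$ prefers $w$ to his spouse in $\mu$; $\mu$ is stable if it has no blocking pair. A randomized protocol must answer correctly with probability at least $2/3$ on every input; the constant in $O(\log n)$ may depend on $\varepsilon,\delta$. *)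

theory Defs
  imports "HOL-Probability.Probability_Mass_Function"
begin

text \<open>A deterministic two-party protocol tree: Alice holds an input of type 'a,
Bob one of type 'b.  At an Alice node, Alice sends one bit computed from her
input (and the transcript, implicit in the position in the tree); similarly
for Bob.\<close>

datatype ('a, 'b) ptree =
    Out bool
  | ANode "'a \<Rightarrow> bool" "('a, 'b) ptree" "('a, 'b) ptree"
  | BNode "'b \<Rightarrow> bool" "('a, 'b) ptree" "('a, 'b) ptree"

fun exec :: "('a, 'b) ptree \<Rightarrow> 'a \<Rightarrow> 'b \<Rightarrow> bool" where
  "exec (Out v) x y = v"
| "exec (ANode f l r) x y = (if f x then exec l x y else exec r x y)"
| "exec (BNode g l r) x y = (if g y then exec l x y else exec r x y)"

text \<open>Communication cost = number of bits sent in the worst case = depth.\<close>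
fun depth :: "('a, 'b) ptree \<Rightarrow> nat" where
  "depth (Out v) = 0"
| "depth (ANode f l r) = Suc (max (depth l) (depth r))"
| "depth (BNode g l r) = Suc (max (depth l) (depth r))"

text \<open>A private-coin randomized protocol: a protocol tree in which Alice's
messages depend on her input and her private random string ra (drawn from
the distribution ca), Bob's on his input and his private random string rb
(drawn from cb, independently).  Random strings are encoded as naturals.\<close>

definition accept_prob ::
  "('a \<times> nat, 'b \<times> nat) ptree \<Rightarrow> nat pmf \<Rightarrow> nat pmf \<Rightarrow> 'a \<Rightarrow> 'b \<Rightarrow> real" where
  "accept_prob T ca cb x y =
     measure_pmf.prob (pair_pmf ca cb) {(ra, rb). exec T (x, ra) (y, rb)}"

text \<open>Women and men are both {0..<n}.  A full preference profile of the women
assigns to each woman w a strict total order P w on the men {..<n};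
(m, m') \<in> P w means w prefers m to m'.  Likewise for the men.\<close>

definition pref_profile :: "nat \<Rightarrow> (nat \<Rightarrow> (nat \<times> nat) set) \<Rightarrow> bool" where
  "pref_profile n P \<longleftrightarrow>
     (\<forall>i<n. strict_linear_order_on {..<n} (P i) \<and> P i \<subseteq> {..<n} \<times> {..<n})"

text \<open>A perfect marriage: a bijection from women to men; mu w is w's husband.\<close>
definition perfect_marriage :: "nat \<Rightarrow> (nat \<Rightarrow> nat) \<Rightarrow> bool" where
  "perfect_marriage n \<mu> \<longleftrightarrow> bij_betw \<mu> {..<n} {..<n}"

definition blocking ::
  "nat \<Rightarrow> (nat \<Rightarrow> nat) \<Rightarrow> (nat \<Rightarrow> (nat \<times> nat) set) \<Rightarrow> (nat \<Rightarrow> (nat \<times> nat) set)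
     \<Rightarrow> nat \<Rightarrow> nat \<Rightarrow> bool" where
  "blocking n \<mu> PW PM w m \<longleftrightarrow>
     (m, \<mu> w) \<in> PW w \<and> (w, inv_into {..<n} \<mu> m) \<in> PM m"

definition num_blocking ::
  "nat \<Rightarrow> (nat \<Rightarrow> nat) \<Rightarrow> (nat \<Rightarrow> (nat \<times> nat) set) \<Rightarrow> (nat \<Rightarrow> (nat \<times> nat) set) \<Rightarrow> nat" where
  "num_blocking n \<mu> PW PM =
     card {(w, m). w < n \<and> m < n \<and> blocking n \<mu> PW PM w m}"

end

theory Submission
  imports Defs "HOL-Library.Nat_Bijection" "HOL-Library.Log_Nat" "HOL-Probability.Hoeffding"
begin

text \<open>Alice privately samples k = O(1/\<delta>^2) uniformly random pairs (w, m).  For each one she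
sends the pair and whether w prefers m to her husband (O(log n) bits), and Bob replies whether
m prefers w to his wife, so each round detects a blocking pair with probability
p = #blocking / n^2.  The number of detected pairs is binomially distributed, and by Hoeffding's
inequality the threshold k(\<epsilon> - \<delta>/2) separates p \<ge> \<epsilon> from p \<le> \<epsilon> - \<delta> with error at most 1/3.\<close>

text \<open>Alice sends the L lowest bits of g a, most significant first; the continuation receives
the transmitted number, accumulated in acc.\<close>

fun send_bits :: "nat \<Rightarrow> ('a \<Rightarrow> nat) \<Rightarrow> nat \<Rightarrow> (nat \<Rightarrow> ('a, 'b) ptree) \<Rightarrow> ('a, 'b) ptree" where
  "send_bits 0 g acc cont = cont acc"
| "send_bits (Suc L) g acc cont =
     ANode (\<lambda>a. odd (g a div 2 ^ L)) (send_bits L g (acc + 2 ^ L) cont) (send_bits L g acc cont)"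

lemma exec_send_bits:
  "exec (send_bits L g acc cont) x y = exec (cont (acc + g x mod 2 ^ L)) x y"
proof (induction L arbitrary: acc)
  case 0
  then show ?case by simp
next
  case (Suc L)
  have "g x mod 2 ^ Suc L = 2 ^ L * (g x div 2 ^ L mod 2) + g x mod 2 ^ L"
    using mod_mult2_eq[of "g x" "2 ^ L" 2] by (simp add: mult.commute)
  then show ?case
    using Suc by (cases "odd (g x div 2 ^ L)") (auto simp: add.assoc odd_iff_mod_2_eq_one)
qed

lemma depth_send_bits:
  "(\<And>v. depth (cont v) \<le> D) \<Longrightarrow> depth (send_bits L g acc cont) \<le> L + D"
  by (induction L arbitrary: acc) (auto simp: max_def)

fun threshold_protocol ::
  "('a \<Rightarrow> nat \<Rightarrow> nat) \<Rightarrow> ('b \<Rightarrow> nat \<Rightarrow> bool) \<Rightarrow> nat \<Rightarrow> real \<Rightarrow> nat \<Rightarrow> nat \<Rightarrow> ('a, 'b) ptree"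
where
  "threshold_protocol msg answer L t 0 cnt = Out (t \<le> real cnt)"
| "threshold_protocol msg answer L t (Suc r) cnt =
     send_bits L (\<lambda>a. msg a r) 0 (\<lambda>v. BNode (\<lambda>b. answer b v)
       (threshold_protocol msg answer L t r (Suc cnt)) (threshold_protocol msg answer L t r cnt))"

lemma depth_threshold_protocol:
  "depth (threshold_protocol msg answer L t r cnt) \<le> r * (L + 1)"
proof (induction r arbitrary: cnt)
  case 0
  then show ?case by simp
next
  case (Suc r)
  have "depth (threshold_protocol msg answer L t (Suc r) cnt) \<le> L + (r * (L + 1) + 1)"
    unfolding threshold_protocol.simps by (rule depth_send_bits) (use Suc in auto)
  then show ?case by simp
qed

lemma card_less_Suc_Collect:
  "card {i. i < Suc r \<and> P i} = card {i. i < r \<and> P i} + (if P r then 1 else 0)"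
proof -
  have "{i. i < Suc r \<and> P i} = (if P r then insert r {i. i < r \<and> P i} else {i. i < r \<and> P i})"
    by (auto simp: less_Suc_eq)
  then show ?thesis by auto
qed

lemma exec_threshold_protocol:
  assumes "\<And>i. i < r \<Longrightarrow> msg x i < 2 ^ L \<and> answer y (msg x i) = P i"
  shows "exec (threshold_protocol msg answer L t r cnt) x y \<longleftrightarrow> t \<le> real (cnt + card {i. i < r \<and> P i})"
  using assms
proof (induction r arbitrary: cnt)
  case 0
  then show ?case by simp
next
  case (Suc r)
  then have "msg x r < 2 ^ L" "answer y (msg x r) = P r" by auto
  with Suc show ?case by (simp add: exec_send_bits card_less_Suc_Collect algebra_simps)
qed

lemma count_Pi_pmf_of_set_eq_binomial:
  assumes "finite S" "S \<noteq> {}"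
  shows "map_pmf (\<lambda>f. card {i. i < k \<and> g (f i)}) (Pi_pmf {..<k} d (\<lambda>_. pmf_of_set S))
         = binomial_pmf k (real (card {x\<in>S. g x}) / real (card S))"
proof -
  define p where "p = real (card {x\<in>S. g x}) / real (card S)"
  have p: "p \<in> {0..1}"
    unfolding p_def using assms by (auto simp: divide_le_eq_1 card_gt_0_iff intro!: card_mono)
  have bernoulli: "map_pmf g (pmf_of_set S) = bernoulli_pmf p"
  proof (rule pmf_eqI)
    fix b :: bool
    have "pmf (map_pmf g (pmf_of_set S)) True = p"
      unfolding pmf_map using assms by (simp add: measure_pmf_of_set p_def Int_def vimage_def)
    then show "pmf (map_pmf g (pmf_of_set S)) b = pmf (bernoulli_pmf p) b"
      using p by (cases b) (auto simp: pmf_False_conv_True[of "map_pmf g (pmf_of_set S)"])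
  qed
  have "map_pmf (\<lambda>f. card {i. i < k \<and> g (f i)}) (Pi_pmf {..<k} d (\<lambda>_. pmf_of_set S))
        = map_pmf (\<lambda>h. card {i\<in>{..<k}. h i}) (map_pmf ((\<circ>) g) (Pi_pmf {..<k} d (\<lambda>_. pmf_of_set S)))"
    by (simp add: pmf.map_comp o_def)
  also have "map_pmf ((\<circ>) g) (Pi_pmf {..<k} d (\<lambda>_. pmf_of_set S))
             = Pi_pmf {..<k} (g d) (\<lambda>_. bernoulli_pmf p)"
    unfolding bernoulli[symmetric] by (rule Pi_pmf_map[symmetric]) auto
  also have "map_pmf (\<lambda>h. card {i\<in>{..<k}. h i}) \<dots> = binomial_pmf k p"
    by (rule binomial_pmf_altdef'[symmetric]) (use p in auto)
  finally show ?thesis unfolding p_def .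
qed

lemma hoeffding_exponent_le_one_third:
  fixes \<delta> :: real
  assumes "4 \<le> real k * \<delta>\<^sup>2"
  shows "exp (- 2 * (real k * \<delta> / 2)\<^sup>2 / real k) \<le> 1 / 3"
proof -
  have "k > 0" using assms by (cases k) auto
  then have exponent: "- 2 * (real k * \<delta> / 2)\<^sup>2 / real k = - (real k * \<delta>\<^sup>2 / 2)"
    by (simp add: power2_eq_square)
  have "exp (real k * \<delta>\<^sup>2 / 2) \<ge> 3"
    using exp_ge_add_one_self[of "real k * \<delta>\<^sup>2 / 2"] assms by linarith
  then show ?thesis unfolding exponent by (simp add: exp_minus divide_simps)
qed

lemma binomial_threshold_accepts:
  fixes p \<epsilon> \<delta> :: real
  assumes p: "p \<in> {0..1}" and k: "4 \<le> real k * \<delta>\<^sup>2" and "0 < \<delta>" and "\<epsilon> \<le> p"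
  shows "2 / 3 \<le> measure_pmf.prob (binomial_pmf k p) {j. real k * (\<epsilon> - \<delta> / 2) \<le> real j}"
proof -
  have "k > 0" using k by (cases k) auto
  interpret binomial_distribution k p by unfold_locales (rule p)
  let ?B = "binomial_pmf k p"
  have "{j. \<not> real k * (\<epsilon> - \<delta> / 2) \<le> real j} \<subseteq> {j. real j \<le> real k * p - real k * \<delta> / 2}"
    using \<open>\<epsilon> \<le> p\<close> mult_left_mono[of \<epsilon> p "real k"] by (auto simp: algebra_simps)
  then have "measure_pmf.prob ?B {j. \<not> real k * (\<epsilon> - \<delta> / 2) \<le> real j}
             \<le> measure_pmf.prob ?B {j. real j \<le> real k * p - real k * \<delta> / 2}"
    by (rule measure_pmf.finite_measure_mono) simp
  also have "\<dots> \<le> exp (- 2 * (real k * \<delta> / 2)\<^sup>2 / real k)"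
    using prob_le[OF \<open>k > 0\<close>, of "real k * \<delta> / 2"] \<open>0 < \<delta>\<close> by simp
  also have "\<dots> \<le> 1 / 3" using k by (rule hoeffding_exponent_le_one_third)
  finally show ?thesis
    using measure_pmf.prob_compl[of "{j. real k * (\<epsilon> - \<delta> / 2) \<le> real j}" ?B]
    by (simp add: Compl_eq_Diff_UNIV[symmetric] Collect_neg_eq)
qed

lemma binomial_threshold_rejects:
  fixes p \<epsilon> \<delta> :: real
  assumes p: "p \<in> {0..1}" and k: "4 \<le> real k * \<delta>\<^sup>2" and "0 < \<delta>" and "p \<le> \<epsilon> - \<delta>"
  shows "measure_pmf.prob (binomial_pmf k p) {j. real k * (\<epsilon> - \<delta> / 2) \<le> real j} \<le> 1 / 3"
proof -
  have "k > 0" using k by (cases k) auto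
  interpret binomial_distribution k p by unfold_locales (rule p)
  let ?B = "binomial_pmf k p"
  have "{j. real k * (\<epsilon> - \<delta> / 2) \<le> real j} \<subseteq> {j. real k * p + real k * \<delta> / 2 \<le> real j}"
    using \<open>p \<le> \<epsilon> - \<delta>\<close> mult_left_mono[of p "\<epsilon> - \<delta>" "real k"] by (auto simp: algebra_simps)
  then have "measure_pmf.prob ?B {j. real k * (\<epsilon> - \<delta> / 2) \<le> real j}
             \<le> measure_pmf.prob ?B {j. real k * p + real k * \<delta> / 2 \<le> real j}"
    by (rule measure_pmf.finite_measure_mono) simp
  also have "\<dots> \<le> exp (- 2 * (real k * \<delta> / 2)\<^sup>2 / real k)"
    using prob_ge[OF \<open>k > 0\<close>, of "real k * \<delta> / 2"] \<open>0 < \<delta>\<close> by simp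
  also have "\<dots> \<le> 1 / 3" using k by (rule hoeffding_exponent_le_one_third)
  finally show ?thesis .
qed

text \<open>Alice's random string is the list encoding of k uniform samples from {..<N}; decoding reduces
mod N so that every string, not only those in the support, yields valid samples.  In each round
she sends a sample v together with her bit A x v, and Bob answers A x v \<and> B y v; Bob uses no
randomness.\<close>

lemma density_test_protocol:
  fixes A :: "'a \<Rightarrow> nat \<Rightarrow> bool" and B :: "'b \<Rightarrow> nat \<Rightarrow> bool"
  assumes "0 < N" and "N \<le> 2 ^ L"
  obtains T :: "('a \<times> nat, 'b \<times> nat) ptree" and ca cb
  where "depth T \<le> k * (L + 2)"
    and "\<And>x y. accept_prob T ca cb x y =
           measure_pmf.prob (binomial_pmf k (real (card {v. v < N \<and> A x v \<and> B y v}) / real N))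
             {j. t \<le> real j}"
proof
  define sample where "sample ra i = list_decode ra ! i mod N" for ra i
  define msg where "msg = (\<lambda>(x, ra) i. 2 * sample ra i + (if A x (sample ra i) then 1 else 0))"
  define answer where "answer = (\<lambda>(y, rb :: nat) u. odd u \<and> B y (u div 2))"
  define T where "T = threshold_protocol msg answer (L + 1) t k 0"
  define F where "F = Pi_pmf {..<k} 0 (\<lambda>_. pmf_of_set {..<N})"
  define ca where "ca = map_pmf (\<lambda>f. list_encode (map f [0..<k])) F"
  define cb where "cb = return_pmf (0 :: nat)"
  show "depth T \<le> k * (L + 2)"
    unfolding T_def using depth_threshold_protocol[of msg answer "L + 1" t k 0] by simp
  fix x y
  define hit where "hit v \<longleftrightarrow> A x (v mod N) \<and> B y (v mod N)" for v
  have exec_T: "exec T (x, ra) (y, rb) \<longleftrightarrow> t \<le> real (card {i. i < k \<and> hit (list_decode ra ! i)})"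
    for ra rb
  proof -
    have sample_less: "sample ra i < 2 ^ L" for i
      unfolding sample_def using \<open>0 < N\<close> \<open>N \<le> 2 ^ L\<close> by (meson mod_less_divisor order_less_le_trans)
    have "msg (x, ra) i < 2 ^ (L + 1)" for i
      using sample_less[of i] unfolding msg_def by simp
    moreover have "answer (y, rb) (msg (x, ra) i) \<longleftrightarrow> hit (list_decode ra ! i)" for i
      unfolding answer_def msg_def hit_def sample_def by auto
    ultimately show ?thesis
      unfolding T_def by (subst exec_threshold_protocol) auto
  qed
  have "accept_prob T ca cb x y
        = measure_pmf.prob ca {ra. t \<le> real (card {i. i < k \<and> hit (list_decode ra ! i)})}"
    unfolding accept_prob_def exec_T cb_def
    by (simp add: pair_return_pmf2 vimage_def case_prod_beta)
  also have "\<dots> = measure_pmf.prob F {f. t \<le> real (card {i. i < k \<and> hit (f i)})}"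
  proof -
    have "{i. i < k \<and> hit (map f [0..<k] ! i)} = {i. i < k \<and> hit (f i)}" for f :: "nat \<Rightarrow> nat"
      by auto
    then show ?thesis unfolding ca_def by (simp add: vimage_def)
  qed
  also have "\<dots> = measure_pmf.prob (binomial_pmf k (real (card {v\<in>{..<N}. hit v}) / real N))
                    {j. t \<le> real j}"
  proof -
    have "{..<N} \<noteq> {}" using \<open>0 < N\<close> by auto
    from count_Pi_pmf_of_set_eq_binomial[OF _ this, of k hit 0]
    have "binomial_pmf k (real (card {v\<in>{..<N}. hit v}) / real N)
          = map_pmf (\<lambda>f. card {i. i < k \<and> hit (f i)}) F"
      unfolding F_def by simp
    then show ?thesis by (simp add: vimage_def)
  qed
  also have "{v\<in>{..<N}. hit v} = {v. v < N \<and> A x v \<and> B y v}"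
    unfolding hit_def by auto
  finally show "accept_prob T ca cb x y = measure_pmf.prob
      (binomial_pmf k (real (card {v. v < N \<and> A x v \<and> B y v}) / real N)) {j. t \<le> real j}" .
qed

lemma card_Collect_less_mult_div_mod:
  fixes a b :: nat
  shows "card {v. v < a * b \<and> P (v div b) (v mod b)} = card {(i, j). i < a \<and> j < b \<and> P i j}"
proof (rule bij_betw_same_card[of "\<lambda>v. (v div b, v mod b)"])
  show "bij_betw (\<lambda>v. (v div b, v mod b))
          {v. v < a * b \<and> P (v div b) (v mod b)} {(i, j). i < a \<and> j < b \<and> P i j}"
  proof (rule bij_betw_byWitness[where f' = "\<lambda>(i, j). i * b + j"])
    show "\<forall>v \<in> {v. v < a * b \<and> P (v div b) (v mod b)}. (\<lambda>(i, j). i * b + j) (v div b, v mod b) = v"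
      by simp
    show "\<forall>ij \<in> {(i, j). i < a \<and> j < b \<and> P i j}. (\<lambda>v. (v div b, v mod b)) ((\<lambda>(i, j). i * b + j) ij) = ij"
      by auto
    show "(\<lambda>v. (v div b, v mod b)) ` {v. v < a * b \<and> P (v div b) (v mod b)}
          \<subseteq> {(i, j). i < a \<and> j < b \<and> P i j}"
    proof (rule image_subsetI)
      fix v assume v: "v \<in> {v. v < a * b \<and> P (v div b) (v mod b)}"
      then have "0 < b" by (cases b) auto
      with v show "(v div b, v mod b) \<in> {(i, j). i < a \<and> j < b \<and> P i j}"
        by (simp add: less_mult_imp_div_less)
    qed
    show "(\<lambda>(i, j). i * b + j) ` {(i, j). i < a \<and> j < b \<and> P i j}
          \<subseteq> {v. v < a * b \<and> P (v div b) (v mod b)}"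
    proof clarify
      fix i j assume "i < a" "j < b" "P i j"
      then have "i * b + j < (i + 1) * b" by simp
      also have "\<dots> \<le> a * b" using \<open>i < a\<close> by (intro mult_right_mono) auto
      finally show "i * b + j < a * b \<and> P ((i * b + j) div b) ((i * b + j) mod b)"
        using \<open>j < b\<close> \<open>P i j\<close> by simp
    qed
  qed
qed

lemma num_blocking_eq_card_codes:
  "num_blocking n \<mu> PW PM = card {v. v < n * n \<and>
     (v mod n, \<mu> (v div n)) \<in> PW (v div n) \<and> (v div n, inv_into {..<n} \<mu> (v mod n)) \<in> PM (v mod n)}"
  unfolding num_blocking_def blocking_def by (rule card_Collect_less_mult_div_mod[symmetric])

lemma blocking_density_in_unit:
  assumes "0 < n"
  shows "real (num_blocking n \<mu> PW PM) / real n ^ 2 \<in> {0..1}"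
proof -
  have "num_blocking n \<mu> PW PM \<le> card {..<n * n}"
    unfolding num_blocking_eq_card_codes by (rule card_mono) auto
  then have "real (num_blocking n \<mu> PW PM) \<le> real n ^ 2"
    unfolding of_nat_power[symmetric] of_nat_le_iff by (simp add: power2_eq_square)
  then show ?thesis using assms by (simp add: divide_le_eq_1)
qed

text \<open>A woman w and a man m are encoded as the index w * n + m < 2 ^ (2 * ceillog2 n); Alice
knows whether w prefers m to her husband, Bob whether m prefers w to his wife.\<close>

lemma blocking_density_protocol:
  assumes "0 < n"
  obtains T :: "((nat \<Rightarrow> (nat \<times> nat) set) \<times> nat, (nat \<Rightarrow> (nat \<times> nat) set) \<times> nat) ptree"
    and ca cb
  where "depth T \<le> k * (2 * ceillog2 n + 2)"
    and "\<And>PW PM. accept_prob T ca cb PW PM = measure_pmf.prob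
           (binomial_pmf k (real (num_blocking n \<mu> PW PM) / real n ^ 2)) {j. t \<le> real j}"
proof -
  define A where "A PW v \<longleftrightarrow> (v mod n, \<mu> (v div n)) \<in> PW (v div n)"
    for PW :: "nat \<Rightarrow> (nat \<times> nat) set" and v
  define B where "B PM v \<longleftrightarrow> (v div n, inv_into {..<n} \<mu> (v mod n)) \<in> PM (v mod n)"
    for PM :: "nat \<Rightarrow> (nat \<times> nat) set" and v
  have "0 < n * n" using assms by simp
  moreover have "n * n \<le> 2 ^ (2 * ceillog2 n)"
    unfolding mult_2 power_add by (intro mult_le_mono le_two_power_ceillog2)
  ultimately obtain T ca cb
    where depth: "depth T \<le> k * (2 * ceillog2 n + 2)"
      and accept: "\<And>PW PM. accept_prob T ca cb PW PM = measure_pmf.prob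
            (binomial_pmf k (real (card {v. v < n * n \<and> A PW v \<and> B PM v}) / real (n * n)))
            {j. t \<le> real j}"
    by (rule density_test_protocol[where A = A and B = B]) blast
  show thesis
  proof (rule that[OF depth])
    show "accept_prob T ca cb PW PM = measure_pmf.prob
        (binomial_pmf k (real (num_blocking n \<mu> PW PM) / real n ^ 2)) {j. t \<le> real j}" for PW PM
      unfolding accept num_blocking_eq_card_codes A_def B_def by (simp add: power2_eq_square)
  qed
qed

lemma depth_bound_le_log:
  assumes "2 \<le> n"
  shows "real (k * (2 * ceillog2 n + 2)) \<le> 6 * real k * log 2 (real n)"
proof -
  have "real (ceillog2 n) < log 2 (real n) + 1" using assms by (intro ceillog2_less_log) simp
  moreover have "1 \<le> log 2 (real n)" using assms by simp
  ultimately have "real (2 * ceillog2 n + 2) \<le> 6 * log 2 (real n)" by simp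
  from mult_left_mono[OF this, of "real k"] show ?thesis by (simp add: algebra_simps)
qed

lemma blocking_threshold_protocol:
  fixes \<epsilon> \<delta> :: real
  assumes "0 < \<delta>" and k: "4 \<le> real k * \<delta>\<^sup>2" and "2 \<le> n"
  shows "\<exists>(T :: ((nat \<Rightarrow> (nat \<times> nat) set) \<times> nat, (nat \<Rightarrow> (nat \<times> nat) set) \<times> nat) ptree) ca cb.
     real (depth T) \<le> 6 * real k * log 2 (real n) \<and>
     (\<forall>PW PM.
        (\<epsilon> * real n ^ 2 \<le> real (num_blocking n \<mu> PW PM) \<longrightarrow> 2 / 3 \<le> accept_prob T ca cb PW PM) \<and>
        (real (num_blocking n \<mu> PW PM) \<le> (\<epsilon> - \<delta>) * real n ^ 2 \<longrightarrow>
           2 / 3 \<le> 1 - accept_prob T ca cb PW PM))"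
proof -
  from \<open>2 \<le> n\<close> have "0 < n" and n2: "0 < real n ^ 2" by simp_all
  obtain T ca cb
    where depth: "depth T \<le> k * (2 * ceillog2 n + 2)"
      and accept: "\<And>PW PM. accept_prob T ca cb PW PM = measure_pmf.prob
            (binomial_pmf k (real (num_blocking n \<mu> PW PM) / real n ^ 2))
            {j. real k * (\<epsilon> - \<delta> / 2) \<le> real j}"
    using blocking_density_protocol[OF \<open>0 < n\<close>] by blast
  show ?thesis
  proof (intro exI conjI allI impI)
    show "real (depth T) \<le> 6 * real k * log 2 (real n)"
      using depth_bound_le_log[OF \<open>2 \<le> n\<close>, of k] depth by (meson of_nat_le_iff order_trans)
  next
    fix PW PM
    note p = blocking_density_in_unit[OF \<open>0 < n\<close>, of \<mu> PW PM]
    show "\<epsilon> * real n ^ 2 \<le> real (num_blocking n \<mu> PW PM) \<Longrightarrow> 2 / 3 \<le> accept_prob T ca cb PW PM"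
      unfolding accept using n2
      by (intro binomial_threshold_accepts[OF p k \<open>0 < \<delta>\<close>]) (simp add: le_divide_eq)
    show "real (num_blocking n \<mu> PW PM) \<le> (\<epsilon> - \<delta>) * real n ^ 2 \<Longrightarrow>
        2 / 3 \<le> 1 - accept_prob T ca cb PW PM"
      using binomial_threshold_rejects[OF p k \<open>0 < \<delta>\<close>, of \<epsilon>] n2
      unfolding accept by (simp add: divide_le_eq)
  qed
qed

theorem theorem19:
  fixes \<epsilon> \<delta> :: real
  assumes "\<delta> > 0" and "\<epsilon> \<ge> \<delta>"
  shows "\<exists>C::real. \<forall>n::nat. n \<ge> 2 \<longrightarrow> (\<forall>\<mu>. perfect_marriage n \<mu> \<longrightarrow>
     (\<exists>(T :: ((nat \<Rightarrow> (nat \<times> nat) set) \<times> nat, (nat \<Rightarrow> (nat \<times> nat) set) \<times> nat) ptree)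
        (ca :: nat pmf) (cb :: nat pmf).
        real (depth T) \<le> C * log 2 (real n) \<and>
        (\<forall>PW PM. pref_profile n PW \<longrightarrow> pref_profile n PM \<longrightarrow>
           (real (num_blocking n \<mu> PW PM) \<ge> \<epsilon> * real n ^ 2 \<longrightarrow>
              accept_prob T ca cb PW PM \<ge> 2/3) \<and>
           (real (num_blocking n \<mu> PW PM) \<le> (\<epsilon> - \<delta>) * real n ^ 2 \<longrightarrow>
              1 - accept_prob T ca cb PW PM \<ge> 2/3))))"
proof -
  obtain k :: nat where "4 / \<delta>\<^sup>2 \<le> real k" using real_arch_simple by blast
  with \<open>\<delta> > 0\<close> have k: "4 \<le> real k * \<delta>\<^sup>2" by (simp add: divide_simps)
  show ?thesis
    using blocking_threshold_protocol[OF \<open>\<delta> > 0\<close> k] by (intro exI[of _ "6 * real k"]) blast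
qed

end
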